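(* Let $n\ge 1$ and $r$ be integers. A general quadratic form in $n+1$ variables has an apolar star configuration $\mathbb{X}(r)\subset\mathbb{P}^n$ if and only if $r\geq n+1$.
   Context: Let $S=\mathbb{C}[x_0,\dots,x_n]$ and $T=\mathbb{C}[y_0,\dots,y_n]$, where $T$ acts on $S$ by differentiation, $y_j=\partial/\partial x_j$. For a form $F\in S$, $F^\perp=\{\partial\in T:\partial F=0\}$. A finite set of points $\mathbb{X}\subset\mathbb{P}^n=\mathbb{P}(S_1)$ with defining ideal $I(\mathbb{X})\subseteq T$ is apolar to $F$ if $I(\mathbb{X})\subseteq F^\perp$. A star configuration $\mathbb{X}(r)\subset\mathbb{P}^n$: take $r$ linear forms $l_1,\dots,l_r\in T_1$ such that any $n+1$ of them are linearly independent; $\mathbb{X}(r)$ is the set of $\binom{r}{n}$ points obtained by intersecting the hyperplanes $\{l_i=0\}$ $n$ at a time in all possible ways (for $r<n+1$ the paper regards no star configuration as existing). "A general form" means any form in a suitable nonempty Zariski open subset of the space of forms of that degree. *)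

theory Defs
  imports Complex_Main "HOL-Library.Poly_Mapping"
begin

text \<open>Multivariate polynomials over a coefficient ring, with variables of type 'v,
  represented (as in the AFP entry Polynomials) as finitely supported maps from monomials
  (finitely supported exponent vectors 'v =>0 nat) to coefficients.\<close>
type_synonym ('v, 'a) mpoly = "('v \<Rightarrow>\<^sub>0 nat) \<Rightarrow>\<^sub>0 'a"

definition mpoly_eval :: "('v, 'a::comm_semiring_1) mpoly \<Rightarrow> ('v \<Rightarrow> 'a) \<Rightarrow> 'a" where
  "mpoly_eval p v = (\<Sum>m\<in>Poly_Mapping.keys p. Poly_Mapping.lookup p m * (\<Prod>i\<in>Poly_Mapping.keys m. v i ^ Poly_Mapping.lookup m i))"

definition mon_deg :: "('v \<Rightarrow>\<^sub>0 nat) \<Rightarrow> nat" where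
  "mon_deg \<alpha> = (\<Sum>i\<in>Poly_Mapping.keys \<alpha>. Poly_Mapping.lookup \<alpha> i)"

text \<open>Polynomials in the variables with indices 0..n (the rings S and T).\<close>
definition poly_ring :: "nat \<Rightarrow> (nat, complex) mpoly set" where
  "poly_ring n = {p. \<forall>\<alpha>\<in>Poly_Mapping.keys p. Poly_Mapping.keys \<alpha> \<subseteq> {..n}}"

text \<open>Forms of degree d in S = C[x_0..x_n] (the zero polynomial included).\<close>
definition forms :: "nat \<Rightarrow> nat \<Rightarrow> (nat, complex) mpoly set" where
  "forms n d = {F \<in> poly_ring n. \<forall>\<alpha>\<in>Poly_Mapping.keys F. mon_deg \<alpha> = d}"

text \<open>Action of T on S by differentiation (y_j = d/dx_j): the coefficient of x^gamma in
  D F.  The monomial y^beta sends x^(beta+gamma) to prod_i (beta_i+gamma_i)!/gamma_i! x^gamma,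
  and kills monomials not divisible by x^beta.\<close>
definition diff_act :: "(nat, complex) mpoly \<Rightarrow> (nat, complex) mpoly \<Rightarrow> (nat \<Rightarrow>\<^sub>0 nat) \<Rightarrow> complex" where
  "diff_act D F \<gamma> = (\<Sum>\<beta>\<in>Poly_Mapping.keys D. Poly_Mapping.lookup D \<beta> * Poly_Mapping.lookup F (\<beta> + \<gamma>) *
      (\<Prod>i\<in>Poly_Mapping.keys (\<beta> + \<gamma>). of_nat (fact (Poly_Mapping.lookup (\<beta> + \<gamma>) i)) / of_nat (fact (Poly_Mapping.lookup \<gamma> i))))"

definition perp :: "nat \<Rightarrow> (nat, complex) mpoly \<Rightarrow> (nat, complex) mpoly set" where
  "perp n F = {D \<in> poly_ring n. \<forall>\<gamma>. diff_act D F \<gamma> = 0}"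

definition lin_eval :: "nat \<Rightarrow> (nat \<Rightarrow> complex) \<Rightarrow> (nat \<Rightarrow> complex) \<Rightarrow> complex" where
  "lin_eval n c v = (\<Sum>k\<le>n. c k * v k)"

text \<open>r linear forms l_0..l_(r-1) in T_1 (coefficient vectors on y_0..y_n) such that any
  n+1 of them are linearly independent; by the paper's convention a star configuration
  requires r >= n+1.\<close>
definition star_forms :: "nat \<Rightarrow> nat \<Rightarrow> (nat \<Rightarrow> nat \<Rightarrow> complex) \<Rightarrow> bool" where
  "star_forms n r l \<longleftrightarrow> r \<ge> n + 1 \<and>
     (\<forall>J \<subseteq> {..<r}. card J = n + 1 \<longrightarrow>
        (\<forall>a :: nat \<Rightarrow> complex. (\<forall>k\<le>n. (\<Sum>j\<in>J. a j * l j k) = 0) \<longrightarrow> (\<forall>j\<in>J. a j = 0)))"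

text \<open>The points of X(r): for each n-subset J of the forms, the point of P^n cut out by
  {l_j = 0 : j in J}; its affine cone is the set of v with l_j(v) = 0 for j in J.\<close>
definition star_cone :: "nat \<Rightarrow> nat \<Rightarrow> (nat \<Rightarrow> nat \<Rightarrow> complex) \<Rightarrow> (nat \<Rightarrow> complex) set" where
  "star_cone n r l = {v. \<exists>J \<subseteq> {..<r}. card J = n \<and> (\<forall>j\<in>J. lin_eval n (l j) v = 0)}"

definition star_ideal :: "nat \<Rightarrow> nat \<Rightarrow> (nat \<Rightarrow> nat \<Rightarrow> complex) \<Rightarrow> (nat, complex) mpoly set" where
  "star_ideal n r l = {g \<in> poly_ring n. \<forall>v\<in>star_cone n r l. mpoly_eval g v = 0}"

definition has_apolar_star :: "nat \<Rightarrow> nat \<Rightarrow> (nat, complex) mpoly \<Rightarrow> bool" where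
  "has_apolar_star n r F \<longleftrightarrow>
     (\<exists>l. star_forms n r l \<and> star_ideal n r l \<subseteq> perp n F)"

text \<open>A general form of degree d in n+1 variables has property P: P holds on a nonempty
  Zariski open subset of the space of forms, i.e. there is a polynomial h in the coefficients
  (variables indexed by monomials) not vanishing identically on the space of forms such that
  every form F with h(F) /= 0 satisfies P.\<close>
definition general_form :: "nat \<Rightarrow> nat \<Rightarrow> ((nat, complex) mpoly \<Rightarrow> bool) \<Rightarrow> bool" where
  "general_form n d P \<longleftrightarrow>
     (\<exists>h :: (nat \<Rightarrow>\<^sub>0 nat, complex) mpoly.
        (\<exists>F\<in>forms n d. mpoly_eval h (Poly_Mapping.lookup F) \<noteq> 0) \<and>
        (\<forall>F\<in>forms n d. mpoly_eval h (Poly_Mapping.lookup F) \<noteq> 0 \<longrightarrow> P F))"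

end

theory Submission
  imports Defs "Jordan_Normal_Form.Determinant"
begin

(* Over the complex numbers every quadratic form is diagonal in a suitable basis:
   F = d_0 L_0^2 + ... + d_n L_n^2 with linearly independent linear forms L_m, i.e. points
   q_0, ..., q_n spanning P^n (Gaussian elimination on the symmetric coefficient matrix).
   Take linear forms l_0, ..., l_n dual to q_0, ..., q_n and extend them to l_0, ..., l_(r-1)
   in general position, using points on the moment curve.  Then each q_m belongs to the star
   configuration, cut out by the l_j with j <= n, j ~= m.  A form g vanishing on X(r) has no
   terms of degree at most one because the q_m span; its quadratic part g_2 pairs with F to
   2 (d_0 g_2(q_0) + ... + d_n g_2(q_n)) = 0; and its terms of higher degree kill F anyway. *)

section \<open>Square matrices\<close>

text \<open>An \<open>N \<times> N\<close> matrix is a function \<open>nat \<Rightarrow> nat \<Rightarrow> complex\<close> of which only the entries with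
  indices below \<open>N\<close> matter; row \<open>m\<close> of \<open>Q\<close> is the vector \<open>Q m\<close>.\<close>

definition nonsingular :: "nat \<Rightarrow> (nat \<Rightarrow> nat \<Rightarrow> complex) \<Rightarrow> bool" where
  "nonsingular N Q \<longleftrightarrow> (\<forall>v. (\<forall>m<N. (\<Sum>k<N. Q m k * v k) = 0) \<longrightarrow> (\<forall>k<N. v k = 0))"

definition right_inverse :: "nat \<Rightarrow> (nat \<Rightarrow> nat \<Rightarrow> complex) \<Rightarrow> (nat \<Rightarrow> nat \<Rightarrow> complex) \<Rightarrow> bool" where
  "right_inverse N X Y \<longleftrightarrow> (\<forall>i<N. \<forall>j<N. (\<Sum>k<N. X i k * Y k j) = of_bool (i = j))"

lemma nonsingularD:
  "nonsingular N Q \<Longrightarrow> (\<And>m. m < N \<Longrightarrow> (\<Sum>k<N. Q m k * v k) = 0) \<Longrightarrow> k < N \<Longrightarrow> v k = 0"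
  unfolding nonsingular_def by blast

lemma nonsingular_imp_inverse:
  assumes "nonsingular N Q"
  shows "\<exists>R. right_inverse N Q R \<and> right_inverse N R Q"
proof -
  define A where "A = mat N N (\<lambda>(i, j). Q i j)"
  have A: "A \<in> carrier_mat N N"
    unfolding A_def by simp
  have entry: "(A *\<^sub>v v) $ m = (\<Sum>k<N. Q m k * v $ k)" if "m < N" "v \<in> carrier_vec N" for m v
    using that by (simp add: A_def scalar_prod_def lessThan_atLeast0)
  have "det A \<noteq> 0"
  proof
    assume "det A = 0"
    then obtain v where v: "v \<in> carrier_vec N" "v \<noteq> 0\<^sub>v N" "A *\<^sub>v v = 0\<^sub>v N"
      using det_0_iff_vec_prod_zero[OF A] by blast
    have "v $ k = 0" if "k < N" for k
      using nonsingularD[OF assms _ that, of "\<lambda>k. v $ k"] entry v by (metis index_zero_vec(1))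
    then have "v = 0\<^sub>v N"
      using v(1) by (intro eq_vecI) auto
    with v(2) show False ..
  qed
  then obtain B where B: "B \<in> carrier_mat N N" "B * A = 1\<^sub>m N" "A * B = 1\<^sub>m N"
    using det_non_zero_imp_unit[OF A] unfolding Units_def ring_mat_def by auto
  have "right_inverse N Q (\<lambda>i j. B $$ (i, j)) \<and> right_inverse N (\<lambda>i j. B $$ (i, j)) Q"
    unfolding right_inverse_def
  proof (intro conjI allI impI)
    fix i j assume "i < N" "j < N"
    then have "(A * B) $$ (i, j) = of_bool (i = j)" "(B * A) $$ (i, j) = of_bool (i = j)"
      using B(2,3) by simp_all
    then show "(\<Sum>k<N. Q i k * B $$ (k, j)) = of_bool (i = j)"
      and "(\<Sum>k<N. B $$ (i, k) * Q k j) = of_bool (i = j)"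
      using \<open>i < N\<close> \<open>j < N\<close> B(1) by (simp_all add: A_def scalar_prod_def lessThan_atLeast0)
  qed
  then show ?thesis by blast
qed

lemma nonsingular_if_left_inverse:
  assumes "right_inverse N X Y"
  shows "nonsingular N Y"
  unfolding nonsingular_def
proof (intro allI impI)
  fix v i assume Yv: "\<forall>m<N. (\<Sum>k<N. Y m k * v k) = 0" and i: "i < N"
  have "v i = (\<Sum>j<N. (\<Sum>k<N. X i k * Y k j) * v j)"
    using assms i by (simp add: right_inverse_def)
  also have "\<dots> = (\<Sum>k<N. X i k * (\<Sum>j<N. Y k j * v j))"
    by (simp add: sum_distrib_left sum_distrib_right mult_ac) (rule sum.swap)
  also have "\<dots> = 0"
    using Yv by simp
  finally show "v i = 0" .
qed

definition general_position :: "nat \<Rightarrow> (nat \<Rightarrow> nat \<Rightarrow> complex) \<Rightarrow> bool" where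
  "general_position N l \<longleftrightarrow>
     (\<forall>J a. finite J \<longrightarrow> card J = N \<longrightarrow> (\<forall>k<N. (\<Sum>j\<in>J. a j * l j k) = 0) \<longrightarrow> (\<forall>j\<in>J. a j = 0))"

lemma general_position_moments: "general_position N (\<lambda>j k. of_nat j ^ k)"
  unfolding general_position_def
proof (intro allI impI ballI)
  fix J and a :: "nat \<Rightarrow> complex" and j0
  assume "finite J" "card J = N" "j0 \<in> J" and moments: "\<forall>k<N. (\<Sum>j\<in>J. a j * of_nat j ^ k) = 0"
  define p where "p = (\<Prod>j\<in>J - {j0}. [:- of_nat j, 1:] :: complex poly)"
  have "degree p \<le> card (J - {j0})"
    unfolding p_def using degree_prod_sum_le[of "J - {j0}" "\<lambda>j. [:- of_nat j, 1 :: complex:]"] \<open>finite J\<close>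
    by (simp add: o_def)
  also have "\<dots> < N"
    using card_Diff1_less[OF \<open>finite J\<close> \<open>j0 \<in> J\<close>] \<open>card J = N\<close> by linarith
  finally have deg: "degree p < N" .
  have "(\<Sum>j\<in>J. a j * poly p (of_nat j)) = (\<Sum>i\<le>degree p. coeff p i * (\<Sum>j\<in>J. a j * of_nat j ^ i))"
    by (simp add: poly_altdef sum_distrib_left mult_ac) (rule sum.swap)
  also have "\<dots> = 0"
    using deg moments by (intro sum.neutral) auto
  also have "(\<Sum>j\<in>J. a j * poly p (of_nat j)) = a j0 * poly p (of_nat j0)"
    using \<open>finite J\<close> \<open>j0 \<in> J\<close>
    by (subst sum.remove) (auto simp: p_def poly_prod intro!: sum.neutral prod_zero)
  moreover have "poly p (of_nat j0) \<noteq> 0"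
    unfolding p_def poly_prod using \<open>finite J\<close> by (auto simp: prod_zero_iff)
  ultimately show "a j0 = 0"
    by simp
qed

lemma general_position_transform:
  assumes "nonsingular N M" and "general_position N l"
  shows "general_position N (\<lambda>j k. \<Sum>b<N. M k b * l j b)"
  unfolding general_position_def
proof (intro allI impI)
  fix J a
  assume "finite J" "card J = N" and comb: "\<forall>k<N. (\<Sum>j\<in>J. a j * (\<Sum>b<N. M k b * l j b)) = 0"
  have "(\<Sum>b<N. M k b * (\<Sum>j\<in>J. a j * l j b)) = (\<Sum>j\<in>J. a j * (\<Sum>b<N. M k b * l j b))" for k
    by (simp add: sum_distrib_left mult_ac) (rule sum.swap)
  then have "(\<Sum>j\<in>J. a j * l j b) = 0" if "b < N" for b
    using nonsingularD[OF assms(1), of "\<lambda>b. \<Sum>j\<in>J. a j * l j b"] comb that by simp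
  then show "\<forall>j\<in>J. a j = 0"
    using assms(2) \<open>finite J\<close> \<open>card J = N\<close> by (simp add: general_position_def)
qed

lemma dual_basis_in_general_position:
  assumes "nonsingular N Q"
  shows "\<exists>l. (\<forall>j<N. \<forall>m<N. (\<Sum>k<N. l j k * Q m k) = of_bool (j = m)) \<and> general_position N l"
proof -
  obtain R where QR: "right_inverse N Q R"
    using nonsingular_imp_inverse[OF assms] by blast
  define W where "W k j = (of_nat j ^ k :: complex)" for k j :: nat
  have "nonsingular N W"
    unfolding nonsingular_def
  proof (intro allI impI)
    fix v k assume "\<forall>m<N. (\<Sum>j<N. W m j * v j) = 0" and "k < N"
    with general_position_moments[of N] show "v k = 0"
      unfolding general_position_def W_def
      by (elim allE[of _ "{..<N}"] allE[of _ v]) (auto simp: mult.commute)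
  qed
  then obtain V where WV: "right_inverse N W V" and VW: "right_inverse N V W"
    using nonsingular_imp_inverse by blast
  \<comment> \<open>\<open>l j = R (V w\<^sub>j)\<close> for the moment vector \<open>w\<^sub>j = (j\<^sup>a)\<^sub>a\<close>, where \<open>R = Q\<^sup>-\<^sup>1\<close> and \<open>V\<close> inverts
    \<open>(w\<^sub>0, \<dots>, w\<^sub>N\<^sub>-\<^sub>1)\<close>; for \<open>j < N\<close> this is column \<open>j\<close> of \<open>R\<close>\<close>
  define l where "l j k = (\<Sum>b<N. R k b * (\<Sum>a<N. V b a * W a j))" for j k
  have "l j k = R k j" if "j < N" for j k
    using VW that by (simp add: l_def right_inverse_def)
  then have "\<forall>j<N. \<forall>m<N. (\<Sum>k<N. l j k * Q m k) = of_bool (j = m)"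
    using QR by (simp add: right_inverse_def mult.commute)
  moreover have "general_position N l"
    unfolding l_def W_def
    using nonsingular_if_left_inverse[OF QR] nonsingular_if_left_inverse[OF WV[unfolded W_def]]
    by (intro general_position_transform general_position_moments)
  ultimately show ?thesis
    by blast
qed

section \<open>Diagonalising symmetric matrices by congruence\<close>

definition diagonalizes ::
    "nat \<Rightarrow> (nat \<Rightarrow> nat \<Rightarrow> complex) \<Rightarrow> (nat \<Rightarrow> complex) \<Rightarrow> (nat \<Rightarrow> nat \<Rightarrow> complex) \<Rightarrow> bool" where
  "diagonalizes N Q d A \<longleftrightarrow>
     nonsingular N Q \<and> (\<forall>i<N. \<forall>k<N. A i k = (\<Sum>m<N. d m * Q m i * Q m k))"

lemma nonsingular_extend:
  assumes "nonsingular N Q" and "u N = 1"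
  shows "nonsingular (Suc N) (\<lambda>m k. if m = N then u k else if k < N then Q m k else 0)"
  unfolding nonsingular_def
proof (intro allI impI)
  fix v k
  assume rows: "\<forall>m<Suc N. (\<Sum>k<Suc N. (if m = N then u k else if k < N then Q m k else 0) * v k) = 0"
    and "k < Suc N"
  have low: "v k = 0" if "k < N" for k
  proof (rule nonsingularD[OF assms(1) _ that])
    fix m assume "m < N"
    then show "(\<Sum>k<N. Q m k * v k) = 0"
      using rows[rule_format, of m] by simp
  qed
  moreover have "v N = 0"
    using rows[rule_format, of N] low assms(2) by simp
  ultimately show "v k = 0"
    using \<open>k < Suc N\<close> less_Suc_eq by blast
qed

lemma diagonalizes_Suc:
  assumes "diagonalizes N Q d (\<lambda>i k. A i k - a * u i * u k)"
    and "u N = 1" and row: "\<And>k. k \<le> N \<Longrightarrow> A N k = a * u k"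
    and sym: "\<And>k. k \<le> N \<Longrightarrow> A k N = A N k"
  shows "diagonalizes (Suc N) (\<lambda>m k. if m = N then u k else if k < N then Q m k else 0) (d(N := a)) A"
  unfolding diagonalizes_def
proof (intro conjI allI impI)
  show "nonsingular (Suc N) (\<lambda>m k. if m = N then u k else if k < N then Q m k else 0)"
    using assms(1,2) by (simp add: diagonalizes_def nonsingular_extend)
next
  fix i k assume "i < Suc N" "k < Suc N"
  have "(\<Sum>m<Suc N. (d(N := a)) m * (if m = N then u i else if i < N then Q m i else 0) *
          (if m = N then u k else if k < N then Q m k else 0))
      = (if i < N \<and> k < N then (\<Sum>m<N. d m * Q m i * Q m k) else 0) + a * u i * u k"
    by (cases "i < N"; cases "k < N") simp_all
  also have "\<dots> = A i k"
  proof (cases "i < N \<and> k < N")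
    case True
    then have "A i k - a * u i * u k = (\<Sum>m<N. d m * Q m i * Q m k)"
      using assms(1) by (simp add: diagonalizes_def)
    then show ?thesis
      using True by (simp add: algebra_simps)
  next
    case False
    then show ?thesis
      using \<open>i < Suc N\<close> \<open>k < Suc N\<close> row[of k] row[of i] sym[of i] assms(2) by (auto simp: less_Suc_eq)
  qed
  finally show "A i k = (\<Sum>m<Suc N. (d(N := a)) m * (if m = N then u i else if i < N then Q m i else 0) *
          (if m = N then u k else if k < N then Q m k else 0))" ..
qed

text \<open>\<open>shear_cols i s c Q = Q (I + c E\<^sub>i\<^sub>s)\<close>, and \<open>shear_rows i s c (shear_cols i s c A)\<close> is the
  congruence \<open>(I + c E\<^sub>i\<^sub>s)\<^sup>T A (I + c E\<^sub>i\<^sub>s)\<close>.\<close>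

definition shear_cols :: "nat \<Rightarrow> nat \<Rightarrow> complex \<Rightarrow> (nat \<Rightarrow> nat \<Rightarrow> complex) \<Rightarrow> nat \<Rightarrow> nat \<Rightarrow> complex" where
  "shear_cols i s c Q = (\<lambda>m k. if k = s then Q m s + c * Q m i else Q m k)"

definition shear_rows :: "nat \<Rightarrow> nat \<Rightarrow> complex \<Rightarrow> (nat \<Rightarrow> nat \<Rightarrow> complex) \<Rightarrow> nat \<Rightarrow> nat \<Rightarrow> complex" where
  "shear_rows i s c A = (\<lambda>j k. if j = s then A s k + c * A i k else A j k)"

lemma nonsingular_shear_cols:
  assumes "nonsingular N Q" and "i < N" "s < N" "i \<noteq> s"
  shows "nonsingular N (shear_cols i s c Q)"
  unfolding nonsingular_def
proof (intro allI impI)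
  fix v k
  assume rows: "\<forall>m<N. (\<Sum>k<N. shear_cols i s c Q m k * v k) = 0" and "k < N"
  define w where "w = v(i := v i + c * v s)"
  have "(\<Sum>k<N. shear_cols i s c Q m k * v k) = (\<Sum>k<N. Q m k * w k)" for m
  proof -
    have "(\<Sum>k<N. shear_cols i s c Q m k * v k)
        = (\<Sum>k<N. Q m k * v k + (if k = s then c * Q m i * v s else 0))"
      by (rule sum.cong) (auto simp: shear_cols_def algebra_simps)
    also have "\<dots> = (\<Sum>k<N. Q m k * v k + (if k = i then Q m i * (c * v s) else 0))"
      using assms(2,3) by (simp add: sum.distrib)
    also have "\<dots> = (\<Sum>k<N. Q m k * w k)"
      by (rule sum.cong) (auto simp: w_def algebra_simps)
    finally show ?thesis .
  qed
  then have w0: "w k = 0" if "k < N" for k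
    using nonsingularD[OF assms(1), of w] rows that by simp
  have "v s = 0"
    using w0[of s] assms(3,4) by (simp add: w_def)
  then show "v k = 0"
    using w0[OF \<open>k < N\<close>] by (cases "k = i") (auto simp: w_def)
qed

lemma diagonalizes_shear:
  assumes "diagonalizes N Q d (shear_rows i s c (shear_cols i s c A))" and "i < N" "s < N" "i \<noteq> s"
  shows "diagonalizes N (shear_cols i s (- c) Q) d A"
proof -
  define D where "D j k = (\<Sum>m<N. d m * Q m j * Q m k)" for j k
  have D: "D j k = shear_rows i s c (shear_cols i s c A) j k" if "j < N" "k < N" for j k
    using assms(1) that by (simp add: diagonalizes_def D_def)
  have expand: "(\<Sum>m<N. d m * shear_cols i s (- c) Q m j * shear_cols i s (- c) Q m k)
      = D j k - (if k = s then c * D j i else 0) - (if j = s then c * D i k else 0)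
        + (if j = s \<and> k = s then c * c * D i i else 0)" for j k
    by (cases "j = s"; cases "k = s")
      (simp_all add: shear_cols_def D_def algebra_simps sum.distrib sum_subtractf sum_distrib_left)
  show ?thesis
    unfolding diagonalizes_def
  proof (intro conjI allI impI)
    show "nonsingular N (shear_cols i s (- c) Q)"
      using assms by (simp add: diagonalizes_def nonsingular_shear_cols)
  next
    fix j k assume "j < N" "k < N"
    then show "A j k = (\<Sum>m<N. d m * shear_cols i s (- c) Q m j * shear_cols i s (- c) Q m k)"
      unfolding expand using D assms(2-4)
      by (cases "j = s"; cases "k = s") (simp_all add: shear_rows_def shear_cols_def algebra_simps)
  qed
qed

lemma shear_congruence_symmetric:
  assumes "\<And>j k. j < N \<Longrightarrow> k < N \<Longrightarrow> A j k = A k j" and "i < N" "j < N" "k < N"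
  shows "shear_rows i s c (shear_cols i s c A) j k = shear_rows i s c (shear_cols i s c A) k j"
  using assms by (auto simp: shear_rows_def shear_cols_def)

lemma shear_congruence_pivot:
  assumes "A s s = 0" and "A s i \<noteq> 0" and "A i s = A s i" and "i \<noteq> s"
  obtains c where "shear_rows i s c (shear_cols i s c A) s s \<noteq> 0"
proof -
  have pivot_eq: "shear_rows i s c (shear_cols i s c A) s s = c * c * A i i + 2 * c * A s i" for c
    using assms(1,3,4) by (simp add: shear_rows_def shear_cols_def algebra_simps)
  \<comment> \<open>the values for \<open>c = 1\<close> and \<open>c = -1\<close> differ by \<open>4 * A s i \<noteq> 0\<close>\<close>
  show thesis
  proof (cases "A i i + 2 * A s i = 0")
    case True
    then have "A i i = - (2 * A s i)"
      by (simp add: eq_neg_iff_add_eq_0)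
    then show thesis
      using that[of "-1"] pivot_eq[of "-1"] assms(2) by simp
  next
    case False
    then show thesis
      using that[of 1] pivot_eq[of 1] by simp
  qed
qed

lemma symmetric_imp_diagonalizable:
  assumes "\<And>i k. i < N \<Longrightarrow> k < N \<Longrightarrow> A i k = A k i"
  shows "\<exists>Q d. diagonalizes N Q d A"
  using assms
proof (induction N arbitrary: A)
  case 0
  then show ?case
    by (simp add: diagonalizes_def nonsingular_def)
next
  case (Suc N)
  have peel: "\<exists>Q d. diagonalizes (Suc N) Q d B"
    if sym: "\<And>i k. i < Suc N \<Longrightarrow> k < Suc N \<Longrightarrow> B i k = B k i"
      and row: "\<And>k. k \<le> N \<Longrightarrow> B N k = a * u k" and "u N = 1" for B a u
  proof -
    obtain Q d where "diagonalizes N Q d (\<lambda>i k. B i k - a * u i * u k)"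
      using Suc.IH[of "\<lambda>i k. B i k - a * u i * u k"] sym by (auto simp: mult_ac)
    from this \<open>u N = 1\<close> row
    have "diagonalizes (Suc N) (\<lambda>m k. if m = N then u k else if k < N then Q m k else 0) (d(N := a)) B"
      by (rule diagonalizes_Suc) (auto intro: sym)
    then show ?thesis
      by blast
  qed
  have pivot: "\<exists>Q d. diagonalizes (Suc N) Q d B"
    if "\<And>i k. i < Suc N \<Longrightarrow> k < Suc N \<Longrightarrow> B i k = B k i" and "B N N \<noteq> 0" for B
    using peel[of B "B N N" "\<lambda>k. B N k / B N N"] that by simp
  consider "A N N \<noteq> 0" | "\<forall>k\<le>N. A N k = 0" | i where "i < N" "A N N = 0" "A N i \<noteq> 0"
    using le_neq_implies_less by blast
  then show ?case
  proof cases
    case 1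
    then show ?thesis
      using pivot Suc.prems by blast
  next
    case 2
    then show ?thesis
      using peel[of A 0 "\<lambda>k. of_bool (k = N)"] Suc.prems by simp
  next
    case (3 i)
    then obtain c where "shear_rows i N c (shear_cols i N c A) N N \<noteq> 0"
      using shear_congruence_pivot[of A N i] Suc.prems by force
    with pivot obtain Q d where "diagonalizes (Suc N) Q d (shear_rows i N c (shear_cols i N c A))"
      using shear_congruence_symmetric[of "Suc N" A i] Suc.prems \<open>i < N\<close> by force
    then show ?thesis
      using diagonalizes_shear[of "Suc N" Q d i N c A] \<open>i < N\<close> by auto
  qed
qed

section \<open>Monomials\<close>

definition monomial_eval :: "('v \<Rightarrow> 'a::comm_semiring_1) \<Rightarrow> ('v \<Rightarrow>\<^sub>0 nat) \<Rightarrow> 'a" where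
  "monomial_eval v \<alpha> = (\<Prod>i\<in>Poly_Mapping.keys \<alpha>. v i ^ Poly_Mapping.lookup \<alpha> i)"

lemma mon_deg_eq_sum:
  "finite S \<Longrightarrow> Poly_Mapping.keys \<alpha> \<subseteq> S \<Longrightarrow> mon_deg \<alpha> = (\<Sum>i\<in>S. Poly_Mapping.lookup \<alpha> i)"
  unfolding mon_deg_def by (rule sum.mono_neutral_left) (auto simp: in_keys_iff)

lemma monomial_eval_eq_prod:
  "finite S \<Longrightarrow> Poly_Mapping.keys \<alpha> \<subseteq> S \<Longrightarrow> monomial_eval v \<alpha> = (\<Prod>i\<in>S. v i ^ Poly_Mapping.lookup \<alpha> i)"
  unfolding monomial_eval_def by (rule prod.mono_neutral_left) (auto simp: in_keys_iff)

lemma mon_deg_add: "mon_deg (\<alpha> + \<beta>) = mon_deg \<alpha> + mon_deg \<beta>"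
proof -
  let ?S = "Poly_Mapping.keys \<alpha> \<union> Poly_Mapping.keys \<beta>"
  have "mon_deg (\<alpha> + \<beta>) = (\<Sum>i\<in>?S. Poly_Mapping.lookup (\<alpha> + \<beta>) i)"
    using keys_add[of \<alpha> \<beta>] by (intro mon_deg_eq_sum) auto
  also have "\<dots> = mon_deg \<alpha> + mon_deg \<beta>"
    by (simp add: lookup_add sum.distrib mon_deg_eq_sum[of ?S])
  finally show ?thesis .
qed

lemma monomial_eval_add: "monomial_eval v (\<alpha> + \<beta>) = monomial_eval v \<alpha> * monomial_eval v \<beta>"
proof -
  let ?S = "Poly_Mapping.keys \<alpha> \<union> Poly_Mapping.keys \<beta>"
  have "monomial_eval v (\<alpha> + \<beta>) = (\<Prod>i\<in>?S. v i ^ Poly_Mapping.lookup (\<alpha> + \<beta>) i)"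
    using keys_add[of \<alpha> \<beta>] by (intro monomial_eval_eq_prod) auto
  also have "\<dots> = monomial_eval v \<alpha> * monomial_eval v \<beta>"
    by (simp add: lookup_add power_add prod.distrib monomial_eval_eq_prod[of ?S])
  finally show ?thesis .
qed

lemma mon_deg_single [simp]: "mon_deg (Poly_Mapping.single i k) = k"
  by (simp add: mon_deg_def)

lemma monomial_eval_single [simp]: "monomial_eval v (Poly_Mapping.single i k) = v i ^ k"
  by (simp add: monomial_eval_def)

lemma mon_deg_eq_0_iff [simp]: "mon_deg \<alpha> = 0 \<longleftrightarrow> \<alpha> = 0"
  by (auto simp: mon_deg_def in_keys_iff intro: poly_mapping_eqI)

lemma mon_deg_Suc_split:
  assumes "mon_deg \<alpha> = Suc d"
  obtains i \<beta> where "\<alpha> = Poly_Mapping.single i 1 + \<beta>" and "mon_deg \<beta> = d"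
proof -
  obtain i where "i \<in> Poly_Mapping.keys \<alpha>"
    using assms by (metis mon_deg_eq_0_iff keys_eq_empty nat.distinct(1) all_not_in_conv)
  then have "\<alpha> = Poly_Mapping.single i 1 + (\<alpha> - Poly_Mapping.single i 1)"
    by (intro poly_mapping_eqI) (auto simp: lookup_add lookup_minus lookup_single in_keys_iff when_def)
  moreover from this have "mon_deg (\<alpha> - Poly_Mapping.single i 1) = d"
    using assms mon_deg_add[of "Poly_Mapping.single i 1" "\<alpha> - Poly_Mapping.single i 1"] by simp
  ultimately show thesis
    by (rule that)
qed

lemma mon_deg_1_cases:
  assumes "mon_deg \<alpha> = 1"
  obtains i where "\<alpha> = Poly_Mapping.single i 1"
proof -
  from assms have "mon_deg \<alpha> = Suc 0"
    by simp
  then obtain i \<beta> where "\<alpha> = Poly_Mapping.single i 1 + \<beta>" and "mon_deg \<beta> = 0"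
    by (rule mon_deg_Suc_split)
  then show thesis
    using that by simp
qed

lemma mon_deg_2_cases:
  assumes "mon_deg \<alpha> = 2"
  obtains i k where "\<alpha> = Poly_Mapping.single i 1 + Poly_Mapping.single k 1"
proof -
  from assms have "mon_deg \<alpha> = Suc 1"
    by simp
  then obtain i \<beta> where "\<alpha> = Poly_Mapping.single i 1 + \<beta>" and "mon_deg \<beta> = 1"
    by (rule mon_deg_Suc_split)
  then show thesis
    using that by (metis mon_deg_1_cases)
qed

lemma mpoly_eval_scaled:
  "mpoly_eval p (\<lambda>i. t * v i)
     = (\<Sum>\<alpha>\<in>Poly_Mapping.keys p. Poly_Mapping.lookup p \<alpha> * t ^ mon_deg \<alpha> * monomial_eval v \<alpha>)"
  by (simp add: mpoly_eval_def monomial_eval_def mon_deg_def power_mult_distrib prod.distrib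
      power_sum mult_ac)

lemma homogeneous_part_vanishes:
  fixes p :: "('v, 'a::{idom, ring_char_0}) mpoly" and v :: "'v \<Rightarrow> 'a"
  assumes "\<And>t. mpoly_eval p (\<lambda>i. t * v i) = 0"
  shows "(\<Sum>\<alpha>\<in>{\<alpha>\<in>Poly_Mapping.keys p. mon_deg \<alpha> = d}. Poly_Mapping.lookup p \<alpha> * monomial_eval v \<alpha>) = 0"
proof -
  define q :: "'a poly" where
    "q = (\<Sum>\<alpha>\<in>Poly_Mapping.keys p. monom (Poly_Mapping.lookup p \<alpha> * monomial_eval v \<alpha>) (mon_deg \<alpha>))"
  have "poly q t = 0" for t
    using assms[of t] by (simp add: q_def mpoly_eval_scaled poly_sum poly_monom mult_ac)
  then have "coeff q d = 0"
    using poly_all_0_iff_0 by (metis coeff_0)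
  moreover have "coeff q d = (\<Sum>\<alpha>\<in>Poly_Mapping.keys p.
      if mon_deg \<alpha> = d then Poly_Mapping.lookup p \<alpha> * monomial_eval v \<alpha> else 0)"
    unfolding q_def coeff_sum coeff_monom by (simp add: eq_commute)
  ultimately show ?thesis
    by (simp add: sum.inter_filter)
qed

section \<open>Apolarity for quadratic forms\<close>

text \<open>The symmetric matrix \<open>A\<close> with \<open>F = (\<Sum>i k. A i k * x\<^sub>i * x\<^sub>k)\<close>.\<close>

definition quadratic_form_matrix :: "(nat, complex) mpoly \<Rightarrow> nat \<Rightarrow> nat \<Rightarrow> complex" where
  "quadratic_form_matrix F i k =
     (if i = k then Poly_Mapping.lookup F (Poly_Mapping.single i 2)
      else Poly_Mapping.lookup F (Poly_Mapping.single i 1 + Poly_Mapping.single k 1) / 2)"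

lemma quadratic_form_matrix_sym: "quadratic_form_matrix F i k = quadratic_form_matrix F k i"
  by (simp add: quadratic_form_matrix_def add.commute)

lemma fact_weight_quadratic_monomial:
  "(\<Prod>j\<in>Poly_Mapping.keys (Poly_Mapping.single i 1 + Poly_Mapping.single k (1::nat)).
      of_nat (fact (Poly_Mapping.lookup (Poly_Mapping.single i 1 + Poly_Mapping.single k (1::nat)) j)))
    = (if i = k then 2 else (1::complex))"
proof (cases "i = k")
  case True
  then have double: "Poly_Mapping.single i 1 + Poly_Mapping.single k 1 = Poly_Mapping.single i (2::nat)"
    by (simp only: single_add[symmetric] one_add_one)
  show ?thesis
    unfolding double using True by simp
next
  case False
  then have "Poly_Mapping.keys (Poly_Mapping.single i 1 + Poly_Mapping.single k (1::nat)) = {i, k}"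
    by (auto simp: in_keys_iff lookup_add lookup_single when_def split: if_splits)
  then show ?thesis
    using False by (simp add: lookup_add lookup_single)
qed

lemma weighted_coeff_eq_sum_squares:
  assumes diag: "diagonalizes (Suc n) Q d (quadratic_form_matrix F)"
    and "mon_deg \<beta> = 2" and "Poly_Mapping.keys \<beta> \<subseteq> {..n}"
  shows "Poly_Mapping.lookup F \<beta> * (\<Prod>j\<in>Poly_Mapping.keys \<beta>. of_nat (fact (Poly_Mapping.lookup \<beta> j)))
    = 2 * (\<Sum>m<Suc n. d m * monomial_eval (Q m) \<beta>)"
proof -
  obtain i k where \<beta>: "\<beta> = Poly_Mapping.single i 1 + Poly_Mapping.single k 1"
    using assms(2) by (rule mon_deg_2_cases)
  have "{i, k} \<subseteq> Poly_Mapping.keys \<beta>"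
    by (auto simp: \<beta> in_keys_iff lookup_add lookup_single)
  then have "i \<le> n" "k \<le> n"
    using assms(3) by auto
  have "(\<Prod>j\<in>Poly_Mapping.keys \<beta>. of_nat (fact (Poly_Mapping.lookup \<beta> j))) = (if i = k then 2 else 1 :: complex)"
    using fact_weight_quadratic_monomial[of i k] by (simp add: \<beta>)
  then have "Poly_Mapping.lookup F \<beta> * (\<Prod>j\<in>Poly_Mapping.keys \<beta>. of_nat (fact (Poly_Mapping.lookup \<beta> j)))
      = 2 * quadratic_form_matrix F i k"
    by (cases "i = k") (simp_all add: \<beta> quadratic_form_matrix_def numeral_2_eq_2 flip: single_add)
  also have "\<dots> = 2 * (\<Sum>m<Suc n. d m * Q m i * Q m k)"
    using diag \<open>i \<le> n\<close> \<open>k \<le> n\<close> by (simp add: diagonalizes_def)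
  also have "\<dots> = 2 * (\<Sum>m<Suc n. d m * monomial_eval (Q m) \<beta>)"
    by (simp add: \<beta> monomial_eval_add mult.assoc)
  finally show ?thesis .
qed

lemma diff_act_quadratic_at_zero:
  assumes F: "F \<in> forms n 2" and g: "g \<in> poly_ring n"
    and diag: "diagonalizes (Suc n) Q d (quadratic_form_matrix F)"
  shows "diff_act g F 0 = 2 * (\<Sum>m<Suc n. d m *
           (\<Sum>\<beta>\<in>{\<beta>\<in>Poly_Mapping.keys g. mon_deg \<beta> = 2}. Poly_Mapping.lookup g \<beta> * monomial_eval (Q m) \<beta>))"
proof -
  let ?w = "\<lambda>\<beta>. \<Prod>j\<in>Poly_Mapping.keys \<beta>. of_nat (fact (Poly_Mapping.lookup \<beta> j)) :: complex"
  have summand: "Poly_Mapping.lookup g \<beta> * Poly_Mapping.lookup F \<beta> * ?w \<beta> = 2 * (\<Sum>m<Suc n. d m *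
      (if mon_deg \<beta> = 2 then Poly_Mapping.lookup g \<beta> * monomial_eval (Q m) \<beta> else 0))"
    if "\<beta> \<in> Poly_Mapping.keys g" for \<beta>
  proof (cases "mon_deg \<beta> = 2")
    case False
    then have "Poly_Mapping.lookup F \<beta> = 0"
      using F by (auto simp: forms_def in_keys_iff)
    then show ?thesis
      using False by simp
  next
    case True
    moreover have "Poly_Mapping.keys \<beta> \<subseteq> {..n}"
      using g that by (auto simp: poly_ring_def)
    ultimately have weighted: "Poly_Mapping.lookup F \<beta> * ?w \<beta> = 2 * (\<Sum>m<Suc n. d m * monomial_eval (Q m) \<beta>)"
      by (rule weighted_coeff_eq_sum_squares[OF diag])
    have "Poly_Mapping.lookup g \<beta> * Poly_Mapping.lookup F \<beta> * ?w \<beta>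
        = Poly_Mapping.lookup g \<beta> * (2 * (\<Sum>m<Suc n. d m * monomial_eval (Q m) \<beta>))"
      by (simp only: mult.assoc weighted)
    also have "\<dots> = 2 * (\<Sum>m<Suc n. d m *
        (if mon_deg \<beta> = 2 then Poly_Mapping.lookup g \<beta> * monomial_eval (Q m) \<beta> else 0))"
      using True by (simp add: sum_distrib_left ring_distribs mult_ac)
    finally show ?thesis .
  qed
  have "diff_act g F 0 = (\<Sum>\<beta>\<in>Poly_Mapping.keys g. Poly_Mapping.lookup g \<beta> * Poly_Mapping.lookup F \<beta> * ?w \<beta>)"
    by (simp add: diff_act_def)
  also have "\<dots> = (\<Sum>\<beta>\<in>Poly_Mapping.keys g. 2 * (\<Sum>m<Suc n. d m *
      (if mon_deg \<beta> = 2 then Poly_Mapping.lookup g \<beta> * monomial_eval (Q m) \<beta> else 0)))"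
    using summand by (rule sum.cong[OF refl])
  also have "\<dots> = 2 * (\<Sum>\<beta>\<in>Poly_Mapping.keys g. \<Sum>m<Suc n. d m *
      (if mon_deg \<beta> = 2 then Poly_Mapping.lookup g \<beta> * monomial_eval (Q m) \<beta> else 0))"
    by (rule sum_distrib_left[symmetric])
  also have "\<dots> = 2 * (\<Sum>m<Suc n. \<Sum>\<beta>\<in>Poly_Mapping.keys g. d m *
      (if mon_deg \<beta> = 2 then Poly_Mapping.lookup g \<beta> * monomial_eval (Q m) \<beta> else 0))"
    by (subst sum.swap) (rule refl)
  also have "\<dots> = 2 * (\<Sum>m<Suc n. d m * (\<Sum>\<beta>\<in>Poly_Mapping.keys g.
      if mon_deg \<beta> = 2 then Poly_Mapping.lookup g \<beta> * monomial_eval (Q m) \<beta> else 0))"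
    by (simp only: sum_distrib_left)
  finally show ?thesis
    by (simp only: sum.inter_filter[OF finite_keys])
qed

lemma diff_act_vanishes_off_zero:
  assumes "F \<in> forms n 2" and low: "\<And>\<beta>. mon_deg \<beta> \<le> 1 \<Longrightarrow> Poly_Mapping.lookup g \<beta> = 0"
    and "\<gamma> \<noteq> 0"
  shows "diff_act g F \<gamma> = 0"
  unfolding diff_act_def
proof (rule sum.neutral, rule ballI)
  fix \<beta> assume "\<beta> \<in> Poly_Mapping.keys g"
  then have "2 \<le> mon_deg \<beta>"
    using low[of \<beta>] by (cases "mon_deg \<beta> \<le> 1") (auto simp: in_keys_iff)
  moreover have "1 \<le> mon_deg \<gamma>"
    using \<open>\<gamma> \<noteq> 0\<close> mon_deg_eq_0_iff[of \<gamma>] by linarith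
  ultimately have "mon_deg (\<beta> + \<gamma>) \<noteq> 2"
    by (simp add: mon_deg_add)
  then have "Poly_Mapping.lookup F (\<beta> + \<gamma>) = 0"
    using assms(1) by (auto simp: forms_def in_keys_iff)
  then show "Poly_Mapping.lookup g \<beta> * Poly_Mapping.lookup F (\<beta> + \<gamma>) *
      (\<Prod>i\<in>Poly_Mapping.keys (\<beta> + \<gamma>). of_nat (fact (Poly_Mapping.lookup (\<beta> + \<gamma>) i)) /
        of_nat (fact (Poly_Mapping.lookup \<gamma> i))) = 0"
    by simp
qed

lemma linear_part_eq_sum_coeffs:
  assumes "g \<in> poly_ring n"
  shows "(\<Sum>\<beta>\<in>{\<beta>\<in>Poly_Mapping.keys g. mon_deg \<beta> = 1}. Poly_Mapping.lookup g \<beta> * monomial_eval v \<beta>)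
    = (\<Sum>k\<le>n. Poly_Mapping.lookup g (Poly_Mapping.single k 1) * v k)"
proof -
  have "inj_on (\<lambda>k. Poly_Mapping.single k (1::nat)) {..n}"
    by (rule inj_onI) (metis lookup_single_eq lookup_single_not_eq zero_neq_one)
  then have "(\<Sum>k\<le>n. Poly_Mapping.lookup g (Poly_Mapping.single k 1) * v k)
      = (\<Sum>\<beta>\<in>(\<lambda>k. Poly_Mapping.single k 1) ` {..n}. Poly_Mapping.lookup g \<beta> * monomial_eval v \<beta>)"
    by (simp add: sum.reindex)
  also have "\<dots> = (\<Sum>\<beta>\<in>{\<beta>\<in>Poly_Mapping.keys g. mon_deg \<beta> = 1}. Poly_Mapping.lookup g \<beta> * monomial_eval v \<beta>)"
  proof (rule sum.mono_neutral_right)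
    show "{\<beta>\<in>Poly_Mapping.keys g. mon_deg \<beta> = 1} \<subseteq> (\<lambda>k. Poly_Mapping.single k 1) ` {..n}"
    proof
      fix \<beta> assume \<beta>: "\<beta> \<in> {\<beta>\<in>Poly_Mapping.keys g. mon_deg \<beta> = 1}"
      then have "mon_deg \<beta> = 1"
        by simp
      then obtain k where "\<beta> = Poly_Mapping.single k 1"
        by (rule mon_deg_1_cases)
      moreover from this have "k \<le> n"
        using \<beta> assms by (auto simp: poly_ring_def)
      ultimately show "\<beta> \<in> (\<lambda>k. Poly_Mapping.single k 1) ` {..n}"
        by blast
    qed
  qed (auto simp: in_keys_iff)
  finally show ?thesis ..
qed

lemma low_degree_coeffs_vanish:
  assumes g: "g \<in> poly_ring n" and Q: "nonsingular (Suc n) Q"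
    and vanish: "\<And>m t. m \<le> n \<Longrightarrow> mpoly_eval g (\<lambda>k. t * Q m k) = 0"
    and "mon_deg \<beta> \<le> 1"
  shows "Poly_Mapping.lookup g \<beta> = 0"
proof (cases "mon_deg \<beta> = 0")
  case True
  have "{\<alpha>\<in>Poly_Mapping.keys g. mon_deg \<alpha> = 0} = Poly_Mapping.keys g \<inter> {0}"
    by auto
  then have "(\<Sum>\<alpha>\<in>Poly_Mapping.keys g \<inter> {0}. Poly_Mapping.lookup g \<alpha> * monomial_eval (Q 0) \<alpha>) = 0"
    using homogeneous_part_vanishes[of g "Q 0" 0] vanish[of 0] by simp
  then show ?thesis
    using True by (cases "0 \<in> Poly_Mapping.keys g") (auto simp: in_keys_iff monomial_eval_def)
next
  case False
  with \<open>mon_deg \<beta> \<le> 1\<close> obtain i where \<beta>: "\<beta> = Poly_Mapping.single i 1"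
    using mon_deg_1_cases by (metis le_neq_implies_less less_one)
  show ?thesis
  proof (cases "i \<le> n")
    case True
    have "(\<Sum>k<Suc n. Q m k * Poly_Mapping.lookup g (Poly_Mapping.single k 1)) = 0" if "m < Suc n" for m
      using homogeneous_part_vanishes[of g "Q m" 1] vanish[of m] linear_part_eq_sum_coeffs[OF g, of "Q m"] that
      by (simp add: lessThan_Suc_atMost mult.commute)
    then show ?thesis
      using nonsingularD[OF Q, of "\<lambda>k. Poly_Mapping.lookup g (Poly_Mapping.single k 1)" i] True \<beta>
      by simp
  next
    case False
    then have "\<beta> \<notin> Poly_Mapping.keys g"
      using g by (auto simp: \<beta> poly_ring_def)
    then show ?thesis
      by (simp add: in_keys_iff)
  qed
qed

lemma perp_if_vanishes_at_diagonalizing_points: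
  assumes F: "F \<in> forms n 2" and diag: "diagonalizes (Suc n) Q d (quadratic_form_matrix F)"
    and g: "g \<in> poly_ring n" and vanish: "\<And>m t. m \<le> n \<Longrightarrow> mpoly_eval g (\<lambda>k. t * Q m k) = 0"
  shows "g \<in> perp n F"
  unfolding perp_def
proof (intro CollectI conjI allI g)
  fix \<gamma>
  show "diff_act g F \<gamma> = 0"
  proof (cases "\<gamma> = 0")
    case True
    have "(\<Sum>\<beta>\<in>{\<beta>\<in>Poly_Mapping.keys g. mon_deg \<beta> = 2}. Poly_Mapping.lookup g \<beta> * monomial_eval (Q m) \<beta>) = 0"
      if "m < Suc n" for m
      using homogeneous_part_vanishes[of g "Q m" 2] vanish[of m] that by simp
    then show ?thesis
      using diff_act_quadratic_at_zero[OF F g diag] True by simp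
  next
    case False
    have "nonsingular (Suc n) Q"
      using diag by (simp add: diagonalizes_def)
    then have "Poly_Mapping.lookup g \<beta> = 0" if "mon_deg \<beta> \<le> 1" for \<beta>
      using low_degree_coeffs_vanish[where Q = Q, OF g _ vanish that] by blast
    then show ?thesis
      using diff_act_vanishes_off_zero[OF F _ False] by blast
  qed
qed

lemma scaled_point_in_star_cone:
  assumes "m \<le> n" and "n + 1 \<le> r" and "\<And>j. j \<le> n \<Longrightarrow> j \<noteq> m \<Longrightarrow> lin_eval n (l j) v = 0"
  shows "(\<lambda>k. t * v k) \<in> star_cone n r l"
  unfolding star_cone_def
proof (intro CollectI exI conjI ballI)
  show "{..n} - {m} \<subseteq> {..<r}" and "card ({..n} - {m}) = n"
    using assms(1,2) by auto
next
  fix j assume "j \<in> {..n} - {m}"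
  then have "lin_eval n (l j) v = 0"
    using assms(3) by simp
  then show "lin_eval n (l j) (\<lambda>k. t * v k) = 0"
    by (simp add: lin_eval_def mult.left_commute flip: sum_distrib_left)
qed

lemma quadratic_form_has_apolar_star:
  assumes F: "F \<in> forms n 2" and r: "n + 1 \<le> r"
  shows "has_apolar_star n r F"
proof -
  obtain Q d where diag: "diagonalizes (Suc n) Q d (quadratic_form_matrix F)"
    using symmetric_imp_diagonalizable quadratic_form_matrix_sym by blast
  then have "nonsingular (Suc n) Q"
    by (simp add: diagonalizes_def)
  then obtain l where dual: "\<forall>j<Suc n. \<forall>m<Suc n. (\<Sum>k<Suc n. l j k * Q m k) = of_bool (j = m)"
    and "general_position (Suc n) l"
    using dual_basis_in_general_position by blast
  then have "star_forms n r l"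
    unfolding star_forms_def general_position_def using r
    by (auto simp: less_Suc_eq_le dest: finite_subset[OF _ finite_lessThan])
  moreover have "star_ideal n r l \<subseteq> perp n F"
  proof
    fix g assume "g \<in> star_ideal n r l"
    then have "g \<in> poly_ring n" and "\<And>v. v \<in> star_cone n r l \<Longrightarrow> mpoly_eval g v = 0"
      by (auto simp: star_ideal_def)
    moreover have "(\<lambda>k. t * Q m k) \<in> star_cone n r l" if "m \<le> n" for m t
      using that r dual by (intro scaled_point_in_star_cone) (auto simp: lin_eval_def lessThan_Suc_atMost)
    ultimately show "g \<in> perp n F"
      using perp_if_vanishes_at_diagonalizing_points[OF F diag] by blast
  qed
  ultimately show ?thesis
    unfolding has_apolar_star_def by blast
qed

theorem lemma3p2:
  fixes n r :: nat
  assumes "n \<ge> 1"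
  shows "general_form n 2 (has_apolar_star n r) \<longleftrightarrow> r \<ge> n + 1"
proof
  assume "general_form n 2 (has_apolar_star n r)"
  then obtain F where "has_apolar_star n r F"
    unfolding general_form_def by blast
  then show "r \<ge> n + 1"
    unfolding has_apolar_star_def star_forms_def by blast
next
  assume "r \<ge> n + 1"
  have "mpoly_eval 1 v = (1 :: complex)" for v :: "(nat \<Rightarrow>\<^sub>0 nat) \<Rightarrow> complex"
    by (simp add: mpoly_eval_def)
  moreover have "0 \<in> forms n 2"
    by (simp add: forms_def poly_ring_def)
  ultimately show "general_form n 2 (has_apolar_star n r)"
    unfolding general_form_def using quadratic_form_has_apolar_star \<open>r \<ge> n + 1\<close>
    by (intro exI[of _ 1] conjI bexI[of _ 0]) auto
qed

end
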